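(* Let $u\equiv0$ and assume $\mathcal R_0<1$. Then $\mathbf 0\in\mathbb R^4$ is globally asymptotically stable in $\mathcal D'=[0,+\infty)^4$ for the system $$\dot E=\beta_E F\Big(1-\frac EK\Big)-(\nu_E+\delta_E)E,\quad \dot M=(1-\nu)\nu_E E-\delta_M M,\quad \dot F=\nu\nu_E E\frac{M}{M+\gamma_sM_s}-\delta_F F,\quad \dot M_s=u-\delta_sM_s.$$
   Context: Parameters: $\beta_E,\nu_E,\delta_E,\delta_M,\delta_F,\delta_s,K>0$, $\nu\in(0,1)$, $\gamma_s\in(0,1]$, and $\delta_s\ge\delta_M$. $\mathcal R_0:=\dfrac{\beta_E\nu\nu_E}{\delta_F(\nu_E+\delta_E)}$. State $z=(E,M,F,M_s)^T\in\mathcal D'$. For a feedback $u:\mathcal D'\to[0,+\infty)$ with $u\in L^\infty_{loc}(\mathcal D')$, write $X(z)$ for the right-hand side above with $u=u(z)$ (its value on the null set $\{M=M_s=0\}$ is irrelevant). Solutions are Filippov solutions: locally Lipschitz curves $z:I\to\mathcal D'$ ($I$ an interval) such that for a.e. $t\in I$, $\dot z(t)\in\bigcap_{\varepsilon>0}\bigcap_{N}\overline{\mathrm{conv}}\,X\big(((z(t)+\varepsilon B)\cap\mathcal D')\setminus N\big)$, where $B$ is the unit ball of $\mathbb R^4$, $N$ ranges over Lebesgue-null subsets of $\mathbb R^4$, and $\overline{\mathrm{conv}}$ denotes the closed convex hull. For $\mathcal S\subset\mathcal D'$, an equilibrium $z_e$ is stable in $\mathcal S$ if for every $\varepsilon>0$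 there is $\delta>0$ such that every Filippov solution with $z(0)\in\mathcal S$ and $\|z(0)-z_e\|<\delta$ satisfies $\|z(t)-z_e\|<\varepsilon$ for all $t>0$; it is a global attractor in $\mathcal S$ if every Filippov solution with $z(0)\in\mathcal S$ satisfies $z(t)\to z_e$; it is globally asymptotically stable in $\mathcal S$ if both hold. *)

theory Defs
  imports "HOL-Analysis.Analysis"
begin

text \<open>State z = (E, M, F, M_s) encoded as a vector in real^4 with
  z$1 = E, z$2 = M, z$3 = F, z$4 = M_s.\<close>

definition Dprime :: "(real^4) set" where
  "Dprime = {z. \<forall>i. 0 \<le> z $ i}"

text \<open>Right-hand side X(z) with feedback u = u(z).  The value on the null set
  {M = M_s = 0} (where Isabelle's division by zero gives 0) is irrelevant.\<close>
definition Xfield ::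
  "real \<Rightarrow> real \<Rightarrow> real \<Rightarrow> real \<Rightarrow> real \<Rightarrow> real \<Rightarrow> real \<Rightarrow> real \<Rightarrow> real
   \<Rightarrow> (real^4 \<Rightarrow> real) \<Rightarrow> real^4 \<Rightarrow> real^4" where
  "Xfield \<beta>E \<nu>E \<delta>E \<delta>M \<delta>F \<delta>s K \<nu> \<gamma>s u z =
     (\<chi> i. if i = 1 then \<beta>E * z$3 * (1 - z$1 / K) - (\<nu>E + \<delta>E) * z$1
           else if i = 2 then (1 - \<nu>) * \<nu>E * z$1 - \<delta>M * z$2
           else if i = 3 then \<nu> * \<nu>E * z$1 * (z$2 / (z$2 + \<gamma>s * z$4)) - \<delta>F * z$3
           else u z - \<delta>s * z$4)"

definition R0 :: "real \<Rightarrow> real \<Rightarrow> real \<Rightarrow> real \<Rightarrow> real \<Rightarrow> real" where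
  "R0 \<beta>E \<nu> \<nu>E \<delta>F \<delta>E = \<beta>E * \<nu> * \<nu>E / (\<delta>F * (\<nu>E + \<delta>E))"

definition filippov_map :: "('a::euclidean_space \<Rightarrow> 'a) \<Rightarrow> 'a set \<Rightarrow> 'a \<Rightarrow> 'a set" where
  "filippov_map X D z =
     (\<Inter>\<epsilon>\<in>{0<..}. \<Inter>N\<in>null_sets lebesgue.
        closure (convex hull (X ` ((cball z \<epsilon> \<inter> D) - N))))"

definition locally_lipschitz_on :: "real set \<Rightarrow> (real \<Rightarrow> 'a::metric_space) \<Rightarrow> bool" where
  "locally_lipschitz_on I z \<longleftrightarrow>
     (\<forall>t\<in>I. \<exists>\<delta>>0. \<exists>L. L-lipschitz_on (ball t \<delta> \<inter> I) z)"

definition filippov_solution ::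
  "('a::euclidean_space \<Rightarrow> 'a) \<Rightarrow> 'a set \<Rightarrow> real set \<Rightarrow> (real \<Rightarrow> 'a) \<Rightarrow> bool" where
  "filippov_solution X D I z \<longleftrightarrow>
     is_interval I \<and> (\<forall>t\<in>I. z t \<in> D) \<and> locally_lipschitz_on I z \<and>
     (AE t in lborel. t \<in> I \<longrightarrow>
        (\<exists>v. (z has_vector_derivative v) (at t within I) \<and> v \<in> filippov_map X D (z t)))"

definition stable_in ::
  "('a::euclidean_space \<Rightarrow> 'a) \<Rightarrow> 'a set \<Rightarrow> 'a set \<Rightarrow> 'a \<Rightarrow> bool" where
  "stable_in X D S ze \<longleftrightarrow>
     (\<forall>\<epsilon>>0. \<exists>\<delta>>0. \<forall>I z. filippov_solution X D I z \<and> 0 \<in> I \<and> z 0 \<in> S \<and>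
        norm (z 0 - ze) < \<delta> \<longrightarrow> (\<forall>t\<in>I. t > 0 \<longrightarrow> norm (z t - ze) < \<epsilon>))"

definition global_attractor_in ::
  "('a::euclidean_space \<Rightarrow> 'a) \<Rightarrow> 'a set \<Rightarrow> 'a set \<Rightarrow> 'a \<Rightarrow> bool" where
  "global_attractor_in X D S ze \<longleftrightarrow>
     (\<forall>I z. filippov_solution X D I z \<and> {0..} \<subseteq> I \<and> z 0 \<in> S \<longrightarrow>
        (z \<longlongrightarrow> ze) at_top)"

definition GAS_in ::
  "('a::euclidean_space \<Rightarrow> 'a) \<Rightarrow> 'a set \<Rightarrow> 'a set \<Rightarrow> 'a \<Rightarrow> bool" where
  "GAS_in X D S ze \<longleftrightarrow> stable_in X D S ze \<and> global_attractor_in X D S ze"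

end

theory Submission
  imports Defs
begin

text \<open>The weighted sum V(w) = E + c2 M + c3 F + M_s is a linear Lyapunov function. The logistic
  factor 1 - E/K and the mating fraction M / (M + \<gamma>s M_s) are at most 1, so the field is dominated
  by a linear one, and R0 < 1 is exactly what allows weights c2, c3 > 0 with
  \<langle>c, X w\<rangle> \<le> -\<alpha> V(w) on the orthant. This half-space bound survives closed convex hulls, hence
  holds for all Filippov velocities. Along a solution V is locally Lipschitz with a.e. derivative
  at most -\<alpha> V; a locally Lipschitz function with a.e. nonpositive derivative is nonincreasing,
  because it maps null sets to null sets. So V is nonincreasing and falls below any e > 0 within
  time V(0) / (\<alpha> e). Since V is comparable to the norm on the orthant, the origin is stable and
  attracting.\<close>

lemma locally_lipschitz_on_continuous_on:
  assumes "locally_lipschitz_on I f"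
  shows "continuous_on I f"
  unfolding continuous_on_eq_continuous_within
proof
  fix t assume t: "t \<in> I"
  then obtain \<delta> L where "\<delta> > 0" and L: "L-lipschitz_on (ball t \<delta> \<inter> I) f"
    using assms unfolding locally_lipschitz_on_def by blast
  then have "continuous (at t within ball t \<delta> \<inter> I) f"
    using t by (intro lipschitz_on_continuous_within) auto
  moreover have "at t within ball t \<delta> \<inter> I = at t within I"
    using \<open>\<delta> > 0\<close> by (intro at_within_nhd[of _ "ball t \<delta>"]) auto
  ultimately show "continuous (at t within I) f" by simp
qed

lemma locally_lipschitz_on_compose_bounded_linear:
  assumes "bounded_linear g" and "locally_lipschitz_on I z"
  shows "locally_lipschitz_on I (\<lambda>t. g (z t))"
  unfolding locally_lipschitz_on_def
proof
  fix t assume "t \<in> I"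
  then obtain \<delta> L where "\<delta> > 0" "L-lipschitz_on (ball t \<delta> \<inter> I) z"
    using assms(2) unfolding locally_lipschitz_on_def by blast
  moreover obtain C where "C-lipschitz_on UNIV g"
    using bounded_linear.lipschitz_boundE[OF assms(1)] .
  ultimately show "\<exists>\<delta>>0. \<exists>L. L-lipschitz_on (ball t \<delta> \<inter> I) (\<lambda>t. g (z t))"
    by (metis lipschitz_on_compose2 lipschitz_on_subset subset_UNIV)
qed

lemma locally_lipschitz_on_add_linear:
  fixes f :: "real \<Rightarrow> real"
  assumes "locally_lipschitz_on I f"
  shows "locally_lipschitz_on I (\<lambda>t. f t + k * t)"
  unfolding locally_lipschitz_on_def
proof
  fix t assume "t \<in> I"
  then obtain \<delta> L where "\<delta> > 0" "L-lipschitz_on (ball t \<delta> \<inter> I) f"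
    using assms unfolding locally_lipschitz_on_def by blast
  moreover have "(\<bar>k\<bar> * 1)-lipschitz_on (ball t \<delta> \<inter> I) (\<lambda>t. k * t)"
    by (rule lipschitz_on_cmult_real[OF lipschitz_on_id])
  ultimately show "\<exists>\<delta>>0. \<exists>L. L-lipschitz_on (ball t \<delta> \<inter> I) (\<lambda>t. f t + k * t)"
    by (blast intro: lipschitz_on_add)
qed

lemma locally_lipschitz_on_subset:
  assumes "locally_lipschitz_on I z" and "J \<subseteq> I"
  shows "locally_lipschitz_on J z"
  unfolding locally_lipschitz_on_def
proof
  fix t assume "t \<in> J"
  then obtain \<delta> L where "\<delta> > 0" "L-lipschitz_on (ball t \<delta> \<inter> I) z"
    using assms unfolding locally_lipschitz_on_def by blast
  moreover have "ball t \<delta> \<inter> J \<subseteq> ball t \<delta> \<inter> I" using assms(2) by blast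
  ultimately show "\<exists>\<delta>>0. \<exists>L. L-lipschitz_on (ball t \<delta> \<inter> J) z"
    by (blast intro: lipschitz_on_subset)
qed

lemma negligible_image_locally_lipschitz:
  fixes h :: "real \<Rightarrow> real"
  assumes "locally_lipschitz_on I h" "N \<subseteq> I" "negligible N"
  shows "negligible (h ` N)"
proof (rule negligible_locally_Lipschitz_image)
  fix x assume "x \<in> N"
  then obtain \<delta> L where "\<delta> > 0" and L: "L-lipschitz_on (ball x \<delta> \<inter> I) h"
    using assms(1,2) unfolding locally_lipschitz_on_def by blast
  have "norm (h y - h x) \<le> L * norm (y - x)" if "y \<in> N \<inter> ball x \<delta>" for y
    using lipschitz_onD[OF L, of y x] that \<open>x \<in> N\<close> \<open>\<delta> > 0\<close> assms(2) by (auto simp: dist_norm)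
  then show "\<exists>T B. open T \<and> x \<in> T \<and> (\<forall>y\<in>N \<inter> T. norm (h y - h x) \<le> B * norm (y - x))"
    using \<open>\<delta> > 0\<close> by (intro exI[of _ "ball x \<delta>"] exI[of _ L]) auto
qed (use assms in auto)

lemma last_crossing:
  fixes h :: "real \<Rightarrow> real"
  assumes "a \<le> b" and h: "continuous_on {a..b} h" and y: "h a < y" "y < h b"
  obtains t where "a \<le> t" "t < b" "h t = y" "\<And>s. t < s \<Longrightarrow> s \<le> b \<Longrightarrow> y < h s"
proof -
  define S where "S = {t \<in> {a..b}. h t = y}"
  have "S \<noteq> {}" using IVT'[of h a y b] \<open>a \<le> b\<close> h y by (auto simp: S_def less_imp_le)
  moreover have "closed S"
    unfolding S_def using continuous_closed_preimage_constant[OF h closed_atLeastAtMost] by simp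
  moreover have "bdd_above S" by (auto simp: S_def bdd_above_def)
  ultimately have t: "Sup S \<in> S" and ub: "\<And>s. s \<in> S \<Longrightarrow> s \<le> Sup S"
    by (auto intro: closed_contains_Sup cSup_upper)
  have above: "y < h s" if s: "Sup S < s" "s \<le> b" for s
  proof (rule ccontr)
    assume "\<not> y < h s"
    then obtain x where "s \<le> x" "x \<le> b" "h x = y"
      using IVT'[of h s y b] s y h t by (force simp: S_def intro: continuous_on_subset)
    then show False using ub[of x] s t by (auto simp: S_def)
  qed
  show thesis
  proof (rule that[OF _ _ _ above])
    show "Sup S < b" using t y by (auto simp: S_def order.order_iff_strict)
  qed (use t in \<open>auto simp: S_def\<close>)
qed

lemma locally_lipschitz_AE_deriv_nonpos_antimono:
  fixes f :: "real \<Rightarrow> real"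
  assumes I: "is_interval I" and lip: "locally_lipschitz_on I f"
    and deriv: "AE t in lborel. t \<in> I \<longrightarrow> (\<exists>D\<le>0. (f has_real_derivative D) (at t within I))"
    and ab: "a \<in> I" "b \<in> I" "a \<le> b"
  shows "f b \<le> f a"
proof (rule ccontr)
  assume "\<not> f b \<le> f a"
  then have "f a < f b" by simp
  with ab have "a < b" by (cases "a = b") auto
  have ab_I: "{a..b} \<subseteq> I" using I ab by (meson atLeastAtMost_iff is_interval_1 subsetI)
  \<comment> \<open>Tilting f by a small slope keeps it increasing from a to b; the tilted h is
    strictly decreasing to the right of every point with a nonpositive derivative.\<close>
  define \<eta> where "\<eta> = (f b - f a) / (2 * (b - a))"
  define h where "h t = f t + (- \<eta>) * t" for t
  have "\<eta> > 0" using \<open>f a < f b\<close> \<open>a < b\<close> by (simp add: \<eta>_def)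
  have "\<eta> * (b - a) = (f b - f a) / 2" using \<open>a < b\<close> by (simp add: \<eta>_def field_simps)
  then have "h a < h b" using \<open>f a < f b\<close> by (simp add: h_def algebra_simps)
  have h_lip: "locally_lipschitz_on I h"
    unfolding h_def by (rule locally_lipschitz_on_add_linear[OF lip])
  define N where "N = {t \<in> {a..b}. \<not> (\<exists>D\<le>0. (f has_real_derivative D) (at t within I))}"
  obtain N0 where "N0 \<in> null_sets lborel"
    and "\<And>t. t \<notin> N0 \<Longrightarrow> t \<in> I \<longrightarrow> (\<exists>D\<le>0. (f has_real_derivative D) (at t within I))"
    using deriv by (rule AE_E3) auto
  then have "N \<subseteq> N0" "negligible N0"
    using ab_I by (fastforce simp: N_def, simp add: negligible_iff_null_sets null_sets_completionI)
  then have "negligible (h ` N)"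
    using h_lip ab_I by (intro negligible_image_locally_lipschitz[of I])
      (auto simp: N_def intro: negligible_subset)
  moreover have "{h a<..<h b} \<subseteq> h ` N"
  proof
    fix y assume y: "y \<in> {h a<..<h b}"
    have "continuous_on {a..b} h"
      using locally_lipschitz_on_continuous_on[OF h_lip] ab_I by (rule continuous_on_subset)
    then obtain t where t: "a \<le> t" "t < b" "h t = y" and above: "\<And>s. t < s \<Longrightarrow> s \<le> b \<Longrightarrow> y < h s"
      using last_crossing[of a b h y] \<open>a < b\<close> y by auto
    have "t \<in> N"
    proof (rule ccontr)
      assume "t \<notin> N"
      then obtain D where "D \<le> 0" "(f has_real_derivative D) (at t within I)"
        using t by (auto simp: N_def)
      then have "(h has_real_derivative D - \<eta>) (at t within I)"
        unfolding h_def by (auto intro!: derivative_eq_intros)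
      then obtain d where "d > 0" and dec: "\<And>e. e > 0 \<Longrightarrow> t + e \<in> I \<Longrightarrow> e < d \<Longrightarrow> h (t + e) < h t"
        using has_real_derivative_neg_dec_right \<open>D \<le> 0\<close> \<open>\<eta> > 0\<close> by fastforce
      define e where "e = min (d / 2) (b - t)"
      have "e > 0" "e < d" "t + e \<le> b" using \<open>d > 0\<close> t by (auto simp: e_def)
      moreover have "t + e \<in> I" using ab_I t \<open>e > 0\<close> \<open>t + e \<le> b\<close> by auto
      ultimately have "h (t + e) < h t" using dec by blast
      then show False using above[of "t + e"] \<open>e > 0\<close> \<open>t + e \<le> b\<close> t by auto
    qed
    then show "y \<in> h ` N" using t by auto
  qed
  ultimately have "negligible {h a<..<h b}" by (rule negligible_subset)
  then have "negligible (box (h a) (h b))" by (simp only: box_real)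
  then have "box (h a) (h b) = {}" by (simp only: negligible_interval)
  then show False using \<open>h a < h b\<close> by (simp add: box_eq_empty)
qed

lemma filippov_map_linear_decay:
  fixes c :: "'a::euclidean_space"
  assumes decay: "\<And>w. w \<in> D \<Longrightarrow> inner c (X w) \<le> - \<alpha> * inner c w" and "\<alpha> \<ge> 0"
    and v: "v \<in> filippov_map X D z"
  shows "inner c v \<le> - \<alpha> * inner c z"
proof (rule field_le_epsilon)
  fix e :: real assume "e > 0"
  define r where "r = e / (\<alpha> * norm c + 1)"
  have "\<alpha> * norm c + 1 > 0" using \<open>\<alpha> \<ge> 0\<close> by (simp add: add_nonneg_pos)
  then have "r > 0" and r: "\<alpha> * norm c * r \<le> e"
    using \<open>e > 0\<close> by (auto simp: r_def field_simps)
  \<comment> \<open>The values of X near z lie in a closed half-space, which then contains the Filippov set.\<close>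
  define H where "H = {x. inner c x \<le> - \<alpha> * inner c z + \<alpha> * norm c * r}"
  have "X w \<in> H" if "w \<in> cball z r" "w \<in> D" for w
  proof -
    have "inner c z - inner c w \<le> norm c * norm (z - w)"
      by (metis inner_diff_right norm_cauchy_schwarz)
    also have "\<dots> \<le> norm c * r" using that by (intro mult_left_mono) (auto simp: dist_norm)
    finally have "\<alpha> * (inner c z - inner c w) \<le> \<alpha> * (norm c * r)"
      using \<open>\<alpha> \<ge> 0\<close> by (rule mult_left_mono)
    then show ?thesis using decay[OF \<open>w \<in> D\<close>] by (simp add: H_def algebra_simps)
  qed
  then have "X ` (cball z r \<inter> D - {}) \<subseteq> H" by blast
  then have "closure (convex hull (X ` (cball z r \<inter> D - {}))) \<subseteq> H"
    unfolding H_def by (intro closure_minimal hull_minimal closed_halfspace_le convex_halfspace_le)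
  moreover have "v \<in> closure (convex hull (X ` ((cball z r \<inter> D) - {})))"
    using v \<open>r > 0\<close> unfolding filippov_map_def by blast
  ultimately show "inner c v \<le> - \<alpha> * inner c z + e" using r by (auto simp: H_def)
qed

lemma filippov_solution_inner_decrease:
  fixes c :: "'a::euclidean_space"
  assumes sol: "filippov_solution X D I z"
    and decay: "\<And>w. w \<in> D \<Longrightarrow> inner c (X w) \<le> - \<alpha> * inner c w" and "\<alpha> \<ge> 0"
    and J: "is_interval J" "J \<subseteq> I" and k: "\<And>t. t \<in> J \<Longrightarrow> k \<le> \<alpha> * inner c (z t)"
    and ab: "a \<in> J" "b \<in> J" "a \<le> b"
  shows "inner c (z b) + k * b \<le> inner c (z a) + k * a"
proof (rule locally_lipschitz_AE_deriv_nonpos_antimono[OF J(1) _ _ ab])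
  have "locally_lipschitz_on I z" using sol by (simp add: filippov_solution_def)
  then have "locally_lipschitz_on J z" using J(2) by (rule locally_lipschitz_on_subset)
  then have "locally_lipschitz_on J (\<lambda>t. inner c (z t))"
    by (rule locally_lipschitz_on_compose_bounded_linear[OF bounded_linear_inner_right])
  then show "locally_lipschitz_on J (\<lambda>t. inner c (z t) + k * t)"
    by (rule locally_lipschitz_on_add_linear)
  have "AE t in lborel. t \<in> I \<longrightarrow>
      (\<exists>v. (z has_vector_derivative v) (at t within I) \<and> v \<in> filippov_map X D (z t))"
    using sol by (simp add: filippov_solution_def)
  then show "AE t in lborel. t \<in> J \<longrightarrow>
      (\<exists>D'\<le>0. ((\<lambda>t. inner c (z t) + k * t) has_real_derivative D') (at t within J))"
  proof (rule AE_mp, intro AE_I2 impI)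
    fix t assume "t \<in> J"
      and "t \<in> I \<longrightarrow> (\<exists>v. (z has_vector_derivative v) (at t within I) \<and> v \<in> filippov_map X D (z t))"
    then obtain v where "(z has_vector_derivative v) (at t within J)" "v \<in> filippov_map X D (z t)"
      using J(2) by (blast intro: has_vector_derivative_within_subset)
    then have "((\<lambda>t. inner c (z t)) has_vector_derivative inner c v) (at t within J)"
      by (intro bounded_linear.has_vector_derivative[OF bounded_linear_inner_right])
    then have "((\<lambda>t. inner c (z t) + k * t) has_real_derivative inner c v + k) (at t within J)"
      by (auto simp: has_real_derivative_iff_has_vector_derivative[symmetric]
          intro!: derivative_eq_intros)
    moreover have "inner c v \<le> - \<alpha> * inner c (z t)"
      using filippov_map_linear_decay[OF decay \<open>\<alpha> \<ge> 0\<close> \<open>v \<in> _\<close>] .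
    ultimately show "\<exists>D'\<le>0. ((\<lambda>t. inner c (z t) + k * t) has_real_derivative D') (at t within J)"
      using k[OF \<open>t \<in> J\<close>] by (intro exI[of _ "inner c v + k"]) auto
  qed
qed

lemma filippov_solution_inner_antimono:
  fixes c :: "'a::euclidean_space"
  assumes sol: "filippov_solution X D I z"
    and decay: "\<And>w. w \<in> D \<Longrightarrow> inner c (X w) \<le> - \<alpha> * inner c w" and "\<alpha> \<ge> 0"
    and nonneg: "\<And>w. w \<in> D \<Longrightarrow> 0 \<le> inner c w"
    and "a \<in> I" "b \<in> I" "a \<le> b"
  shows "inner c (z b) \<le> inner c (z a)"
proof -
  have "is_interval I" "\<And>t. t \<in> I \<Longrightarrow> z t \<in> D" using sol by (auto simp: filippov_solution_def)
  then have "inner c (z b) + 0 * b \<le> inner c (z a) + 0 * a"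
    using assms by (intro filippov_solution_inner_decrease[OF sol decay]) auto
  then show ?thesis by simp
qed

lemma stable_in_linear_Lyapunov:
  fixes c :: "'a::euclidean_space"
  assumes decay: "\<And>w. w \<in> D \<Longrightarrow> inner c (X w) \<le> - \<alpha> * inner c w" and "\<alpha> \<ge> 0"
    and coercive: "\<And>w. w \<in> D \<Longrightarrow> m * norm w \<le> inner c w" and "m > 0"
  shows "stable_in X D D 0"
  unfolding stable_in_def
proof (intro allI impI)
  fix \<epsilon> :: real assume "\<epsilon> > 0"
  have "norm c + 1 > 0" by (simp add: add_nonneg_pos)
  define \<delta> where "\<delta> = \<epsilon> * m / (norm c + 1)"
  have "\<delta> > 0" using \<open>\<epsilon> > 0\<close> \<open>m > 0\<close> \<open>norm c + 1 > 0\<close> by (simp add: \<delta>_def)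
  moreover have "norm (z t) < \<epsilon>"
    if sol: "filippov_solution X D I z" and "0 \<in> I" "norm (z 0) < \<delta>" "t \<in> I" "t > 0" for I z t
  proof -
    have "z t \<in> D" using sol \<open>t \<in> I\<close> by (simp add: filippov_solution_def)
    have nonneg: "0 \<le> inner c w" if "w \<in> D" for w
      using coercive[OF that] \<open>m > 0\<close> by (smt (verit) mult_nonneg_nonneg norm_ge_zero)
    have "m * norm (z t) \<le> inner c (z t)" using coercive[OF \<open>z t \<in> D\<close>] .
    also have "\<dots> \<le> inner c (z 0)"
      using that by (intro filippov_solution_inner_antimono[OF sol decay \<open>\<alpha> \<ge> 0\<close> nonneg]) auto
    also have "\<dots> \<le> (norm c + 1) * norm (z 0)"
      using norm_cauchy_schwarz[of c "z 0"] by (simp add: distrib_right add_increasing2)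
    also have "\<dots> < (norm c + 1) * \<delta>"
      using \<open>norm (z 0) < \<delta>\<close> by (intro mult_strict_left_mono \<open>norm c + 1 > 0\<close>)
    also have "\<dots> = m * \<epsilon>"
      using \<open>norm c + 1 > 0\<close> by (simp add: \<delta>_def)
    finally show ?thesis using \<open>m > 0\<close> by simp
  qed
  ultimately show "\<exists>\<delta>>0. \<forall>I z. filippov_solution X D I z \<and> 0 \<in> I \<and> z 0 \<in> D \<and> norm (z 0 - 0) < \<delta>
      \<longrightarrow> (\<forall>t\<in>I. t > 0 \<longrightarrow> norm (z t - 0) < \<epsilon>)"
    by auto
qed

lemma global_attractor_in_linear_Lyapunov:
  fixes c :: "'a::euclidean_space"
  assumes decay: "\<And>w. w \<in> D \<Longrightarrow> inner c (X w) \<le> - \<alpha> * inner c w" and "\<alpha> > 0"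
    and coercive: "\<And>w. w \<in> D \<Longrightarrow> m * norm w \<le> inner c w" and "m > 0"
  shows "global_attractor_in X D D 0"
  unfolding global_attractor_in_def
proof (intro allI impI, elim conjE)
  fix I z assume sol: "filippov_solution X D I z" and "{0..} \<subseteq> I"
  have zD: "z t \<in> D" if "t \<ge> 0" for t
    using sol \<open>{0..} \<subseteq> I\<close> that by (auto simp: filippov_solution_def)
  have nonneg: "0 \<le> inner c w" if "w \<in> D" for w
    using coercive[OF that] \<open>m > 0\<close> by (smt (verit) mult_nonneg_nonneg norm_ge_zero)
  have antimono: "inner c (z t) \<le> inner c (z s)" if "0 \<le> s" "s \<le> t" for s t
    using that \<open>{0..} \<subseteq> I\<close> \<open>\<alpha> > 0\<close>
    by (intro filippov_solution_inner_antimono[OF sol decay _ nonneg]) auto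
  have "((\<lambda>t. inner c (z t)) \<longlongrightarrow> 0) at_top"
  proof (rule tendstoI)
    fix e :: real assume "e > 0"
    \<comment> \<open>While V \<ge> e, V decreases at rate at least \<alpha> e, so this cannot last longer than V(0)/(\<alpha> e).\<close>
    have "\<exists>t\<ge>0. inner c (z t) < e"
    proof (rule ccontr)
      assume "\<not> (\<exists>t\<ge>0. inner c (z t) < e)"
      then have ge: "e \<le> inner c (z t)" if "t \<ge> 0" for t using that by force
      define T where "T = inner c (z 0) / (\<alpha> * e) + 1"
      have "T \<ge> 0" using nonneg[OF zD] \<open>\<alpha> > 0\<close> \<open>e > 0\<close> by (simp add: T_def add_nonneg_pos)
      have "inner c (z T) + (\<alpha> * e) * T \<le> inner c (z 0) + (\<alpha> * e) * 0"
        using \<open>{0..} \<subseteq> I\<close> \<open>T \<ge> 0\<close> \<open>\<alpha> > 0\<close> ge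
        by (intro filippov_solution_inner_decrease[OF sol decay]) (auto simp: is_interval_ci)
      moreover have "(\<alpha> * e) * T = inner c (z 0) + \<alpha> * e"
        using \<open>\<alpha> > 0\<close> \<open>e > 0\<close> by (simp add: T_def distrib_left)
      ultimately show False using ge[OF \<open>T \<ge> 0\<close>] \<open>\<alpha> > 0\<close> \<open>e > 0\<close> by (smt (verit) mult_pos_pos)
    qed
    then obtain t0 where "t0 \<ge> 0" "inner c (z t0) < e" by blast
    then have "dist (inner c (z t)) 0 < e" if "t \<ge> t0" for t
      using antimono[OF \<open>t0 \<ge> 0\<close> that] nonneg[OF zD, of t] that by (simp add: dist_real_def)
    then show "\<forall>\<^sub>F t in at_top. dist (inner c (z t)) 0 < e"
      by (auto simp: eventually_at_top_linorder)
  qed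
  then have lim: "((\<lambda>t. inner c (z t) / m) \<longlongrightarrow> 0) at_top" by (rule tendsto_divide_zero)
  have bound: "\<forall>\<^sub>F t in at_top. norm (z t) \<le> inner c (z t) / m"
    using coercive[OF zD] \<open>m > 0\<close>
    by (auto simp: eventually_at_top_linorder pos_le_divide_eq mult.commute intro!: exI[of _ 0])
  show "(z \<longlongrightarrow> 0) at_top" by (rule Lim_null_comparison[OF bound lim])
qed

lemma norm_le_inner_nonneg_cart:
  fixes c w :: "real^'n"
  assumes "\<And>i. 0 \<le> w $ i" and "\<And>i. m \<le> c $ i" and "0 \<le> m"
  shows "m * norm w \<le> inner c w"
proof -
  have "m * norm w \<le> m * (\<Sum>i\<in>UNIV. w $ i)"
    using norm_le_l1_cart[of w] assms(1,3) by (intro mult_left_mono) auto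
  also have "\<dots> \<le> (\<Sum>i\<in>UNIV. c $ i * w $ i)"
    unfolding sum_distrib_left using assms by (intro sum_mono mult_right_mono) auto
  finally show ?thesis by (simp add: inner_vec_def)
qed

definition lyapunov_weights :: "real \<Rightarrow> real \<Rightarrow> real^4" where
  "lyapunov_weights c2 c3 = (\<chi> i. if i = 2 then c2 else if i = 3 then c3 else 1)"

lemma inner_lyapunov_weights:
  "inner (lyapunov_weights c2 c3) w = w$1 + c2 * w$2 + c3 * w$3 + w$4"
  by (simp add: lyapunov_weights_def inner_vec_def sum_4)

lemma R0_less_1_weights:
  assumes "R0 \<beta>E \<nu> \<nu>E \<delta>F \<delta>E < 1" and "\<beta>E \<ge> 0" "\<nu>E > 0" "\<delta>E > 0" "\<delta>F > 0" "0 < \<nu>" "\<nu> < 1"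
  obtains c2 c3 where "c2 > 0" "c3 > 0" "\<beta>E < c3 * \<delta>F"
    and "c2 * ((1 - \<nu>) * \<nu>E) + c3 * (\<nu> * \<nu>E) < \<nu>E + \<delta>E"
proof -
  have "\<delta>F * (\<nu>E + \<delta>E) > 0" using assms by simp
  then have "\<beta>E * \<nu> * \<nu>E < \<delta>F * (\<nu>E + \<delta>E)"
    using assms(1) by (simp add: R0_def divide_less_eq)
  then have "\<beta>E / \<delta>F < (\<nu>E + \<delta>E) / (\<nu> * \<nu>E)"
    using assms by (simp add: field_simps)
  then obtain c3 where "\<beta>E / \<delta>F < c3" "c3 < (\<nu>E + \<delta>E) / (\<nu> * \<nu>E)"
    using dense by blast
  define c2 where "c2 = (\<nu>E + \<delta>E - c3 * (\<nu> * \<nu>E)) / (2 * ((1 - \<nu>) * \<nu>E))"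
  have "\<beta>E < c3 * \<delta>F"
    using \<open>\<beta>E / \<delta>F < c3\<close> \<open>\<delta>F > 0\<close> by (simp add: pos_divide_less_eq)
  moreover have "c3 * (\<nu> * \<nu>E) < \<nu>E + \<delta>E"
    using \<open>c3 < _\<close> assms by (simp add: pos_less_divide_eq)
  moreover have "c3 > 0"
    using \<open>\<beta>E / \<delta>F < c3\<close> assms by (smt (verit) divide_nonneg_pos)
  moreover have "c2 * ((1 - \<nu>) * \<nu>E) = (\<nu>E + \<delta>E - c3 * (\<nu> * \<nu>E)) / 2"
    using assms by (simp add: c2_def)
  moreover have "c2 > 0"
    using assms \<open>c3 * (\<nu> * \<nu>E) < _\<close> by (simp add: c2_def)
  ultimately show thesis by (intro that[of c2 c3]) auto
qed

lemma Xfield_lyapunov_weights_decay: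
  assumes "\<beta>E \<ge> 0" "\<nu>E \<ge> 0" "\<nu> \<ge> 0" "K > 0" "\<gamma>s \<ge> 0" "c2 \<ge> 0" "c3 \<ge> 0"
    and rates: "\<alpha> \<le> \<nu>E + \<delta>E - c2 * ((1 - \<nu>) * \<nu>E) - c3 * (\<nu> * \<nu>E)"
      "\<alpha> \<le> \<delta>M" "\<alpha> * c3 \<le> c3 * \<delta>F - \<beta>E" "\<alpha> \<le> \<delta>s"
    and "w \<in> Dprime"
  shows "inner (lyapunov_weights c2 c3) (Xfield \<beta>E \<nu>E \<delta>E \<delta>M \<delta>F \<delta>s K \<nu> \<gamma>s (\<lambda>_. 0) w)
    \<le> - \<alpha> * inner (lyapunov_weights c2 c3) w"
proof -
  define E M F S where "E = w$1" "M = w$2" "F = w$3" "S = w$4"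
  have "E \<ge> 0" "M \<ge> 0" "F \<ge> 0" "S \<ge> 0"
    using \<open>w \<in> Dprime\<close> by (auto simp: E_M_F_S_def Dprime_def)
  define \<theta> where "\<theta> = M / (M + \<gamma>s * S)"
  have "0 \<le> \<gamma>s * S" using \<open>S \<ge> 0\<close> \<open>\<gamma>s \<ge> 0\<close> by simp
  then have "\<theta> \<le> 1" using \<open>M \<ge> 0\<close> by (auto simp: \<theta>_def divide_le_eq_1)
  then have "c3 * (\<nu> * \<nu>E * E * \<theta>) \<le> c3 * (\<nu> * \<nu>E * E)"
    using assms \<open>E \<ge> 0\<close> by (intro mult_left_mono mult_left_le) auto
  moreover have "\<beta>E * F * (1 - E / K) \<le> \<beta>E * F"
    using assms \<open>E \<ge> 0\<close> \<open>F \<ge> 0\<close> by (simp add: algebra_simps)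
  moreover have "\<alpha> * E \<le> (\<nu>E + \<delta>E - c2 * ((1 - \<nu>) * \<nu>E) - c3 * (\<nu> * \<nu>E)) * E"
    "\<alpha> * (c2 * M) \<le> \<delta>M * (c2 * M)" "\<alpha> * c3 * F \<le> (c3 * \<delta>F - \<beta>E) * F" "\<alpha> * S \<le> \<delta>s * S"
    using rates \<open>E \<ge> 0\<close> \<open>M \<ge> 0\<close> \<open>F \<ge> 0\<close> \<open>S \<ge> 0\<close> \<open>c2 \<ge> 0\<close>
    by (auto intro!: mult_right_mono)
  moreover have "inner (lyapunov_weights c2 c3) (Xfield \<beta>E \<nu>E \<delta>E \<delta>M \<delta>F \<delta>s K \<nu> \<gamma>s (\<lambda>_. 0) w)
      = \<beta>E * F * (1 - E / K) - (\<nu>E + \<delta>E) * E + c2 * ((1 - \<nu>) * \<nu>E * E - \<delta>M * M)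
        + c3 * (\<nu> * \<nu>E * E * \<theta> - \<delta>F * F) - \<delta>s * S"
    by (simp add: inner_lyapunov_weights Xfield_def E_M_F_S_def \<theta>_def)
  moreover have "inner (lyapunov_weights c2 c3) w = E + c2 * M + c3 * F + S"
    by (simp add: inner_lyapunov_weights E_M_F_S_def)
  ultimately show ?thesis by (simp add: algebra_simps)
qed

theorem theorem2:
  fixes \<beta>E \<nu>E \<delta>E \<delta>M \<delta>F \<delta>s K \<nu> \<gamma>s :: real
  assumes "\<beta>E > 0" "\<nu>E > 0" "\<delta>E > 0" "\<delta>M > 0" "\<delta>F > 0" "\<delta>s > 0" "K > 0"
    and "0 < \<nu>" "\<nu> < 1" and "0 < \<gamma>s" "\<gamma>s \<le> 1" and "\<delta>s \<ge> \<delta>M"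
    and "R0 \<beta>E \<nu> \<nu>E \<delta>F \<delta>E < 1"
  shows "GAS_in (Xfield \<beta>E \<nu>E \<delta>E \<delta>M \<delta>F \<delta>s K \<nu> \<gamma>s (\<lambda>_. 0)) Dprime Dprime 0"
proof -
  obtain c2 c3 where "c2 > 0" "c3 > 0" "\<beta>E < c3 * \<delta>F"
    and slack: "c2 * ((1 - \<nu>) * \<nu>E) + c3 * (\<nu> * \<nu>E) < \<nu>E + \<delta>E"
    using R0_less_1_weights assms by (metis less_imp_le)
  define \<alpha> where "\<alpha> = min (min (\<nu>E + \<delta>E - c2 * ((1 - \<nu>) * \<nu>E) - c3 * (\<nu> * \<nu>E)) \<delta>M)
    (min ((c3 * \<delta>F - \<beta>E) / c3) \<delta>s)"
  have "\<alpha> > 0" using slack \<open>\<beta>E < c3 * \<delta>F\<close> \<open>c3 > 0\<close> assms by (simp add: \<alpha>_def)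
  have "\<alpha> * c3 \<le> c3 * \<delta>F - \<beta>E"
    using \<open>c3 > 0\<close> by (simp add: \<alpha>_def min_le_iff_disj pos_le_divide_eq[symmetric])
  then have decay: "\<And>w. w \<in> Dprime \<Longrightarrow>
      inner (lyapunov_weights c2 c3) (Xfield \<beta>E \<nu>E \<delta>E \<delta>M \<delta>F \<delta>s K \<nu> \<gamma>s (\<lambda>_. 0) w)
      \<le> - \<alpha> * inner (lyapunov_weights c2 c3) w"
    using assms \<open>c2 > 0\<close> \<open>c3 > 0\<close>
    by (intro Xfield_lyapunov_weights_decay) (auto simp: \<alpha>_def)
  have coercive: "\<And>w. w \<in> Dprime \<Longrightarrow>
      min (min 1 c2) c3 * norm w \<le> inner (lyapunov_weights c2 c3) w"
    using \<open>c2 > 0\<close> \<open>c3 > 0\<close>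
    by (intro norm_le_inner_nonneg_cart) (auto simp: Dprime_def lyapunov_weights_def)
  show ?thesis
    unfolding GAS_in_def
    using stable_in_linear_Lyapunov[OF decay _ coercive] global_attractor_in_linear_Lyapunov[OF decay _ coercive]
      \<open>\<alpha> > 0\<close> \<open>c2 > 0\<close> \<open>c3 > 0\<close> by simp
qed

end
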